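(* The map $\psi$ is a homogeneous $(n-1)$-cocycle on $GL_n(\mathbb{C})$: for all $A,A_0,\dots,A_n\in GL_n(\mathbb{C})$, every $n$-tuple $\mathfrak{A}=(A_1,\dots,A_n)$ of elements of $GL_n(\mathbb{C})$, every homogeneous polynomial $P$ and every row vector $x\in\mathbb{C}^n$, $$\psi(A\mathfrak{A})(P,x)=\det(A)\,\psi(\mathfrak{A})(A^TP,xA)\qquad\text{and}\qquad \sum_{i=0}^n(-1)^i\psi(A_0,\dots,\widehat{A_i},\dots,A_n)(P,x)=0 .$$ Consequently $\psi$ defines a class in $H^{n-1}(GL_n(\mathbb{C}),S_0)$, where $S_0$ is the space of functions $H\times\mathbb{C}^n\to\mathbb{C}$ ($H$ the homogeneous polynomials of a fixed degree) with $GL_n(\mathbb{C})$-action $(A\phi)(P,x)=\det(A)\phi(A^TP,xA)$.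
   Context: Notation: $\langle x,v\rangle=\sum_ix_iv_i$ for a row vector $x$ and column vector $v$. For $\sigma\in M_n(\mathbb{C})$ with columns $\sigma_1,\dots,\sigma_n$: $f(\sigma)(x)=\det(\sigma)/\prod_j\langle x,\sigma_j\rangle$ if all $\langle x,\sigma_j\rangle\neq0$ and $0$ otherwise; $f(\sigma)(P,x)=P(-\partial_{x_1},\dots,-\partial_{x_n})f(\sigma)(x)$ (computed where all $\langle x,\sigma_j\rangle\ne0$, and $0$ elsewhere). $(A^TP)(y)=P(yA^T)$. For an $n$-tuple $\mathfrak{A}=(A_1,\dots,A_n)$ of matrices in $GL_n(\mathbb{C})$, write $A_{kj}$ for the $j$-th column of $A_k$; for $x\ne0$ let $j_k$ be the smallest index with $\langle x,A_{kj_k}\rangle\neq0$, and set $\psi(\mathfrak{A})(P,x)=f(A_{1j_1},\dots,A_{nj_n})(P,x)$; set $\psi(\mathfrak{A})(P,0)=0$. For $A\in GL_n(\mathbb{C})$, $A\mathfrak{A}=(AA_1,\dots,AA_n)$. *)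

theory Defs
  imports Complex_Main "HOL-Analysis.Derivative" "Jordan_Normal_Form.Determinant"
begin

type_synonym coeffs = "(nat \<Rightarrow> nat) \<Rightarrow> complex"

text \<open>Polynomials in the variables y_0,...,y_(n-1), given by finitely supported
  coefficient functions on exponent vectors alpha (alpha i = 0 for i >= n).\<close>
definition polys :: "nat \<Rightarrow> coeffs set" where
  "polys n = {c. finite {\<alpha>. c \<alpha> \<noteq> 0} \<and> (\<forall>\<alpha>. c \<alpha> \<noteq> 0 \<longrightarrow> (\<forall>i\<ge>n. \<alpha> i = 0))}"

definition homog_polys :: "nat \<Rightarrow> coeffs set" where
  "homog_polys n = {c \<in> polys n. \<exists>d. \<forall>\<alpha>. c \<alpha> \<noteq> 0 \<longrightarrow> (\<Sum>i<n. \<alpha> i) = d}"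

definition poly_eval :: "nat \<Rightarrow> coeffs \<Rightarrow> complex vec \<Rightarrow> complex" where
  "poly_eval n c y = (\<Sum>\<alpha>\<in>{\<alpha>. c \<alpha> \<noteq> 0}. c \<alpha> * (\<Prod>i<n. (y $ i) ^ \<alpha> i))"

text \<open>(A^T P)(y) = P(y A^T); for a row vector y, y A^T is the vector A *v y.\<close>
definition poly_transp :: "nat \<Rightarrow> complex mat \<Rightarrow> coeffs \<Rightarrow> coeffs" where
  "poly_transp n A c = (THE c'. c' \<in> polys n \<and>
     (\<forall>y\<in>carrier_vec n. poly_eval n c' y = poly_eval n c (A *\<^sub>v y)))"

definition pdiff :: "nat \<Rightarrow> (complex vec \<Rightarrow> complex) \<Rightarrow> complex vec \<Rightarrow> complex" where
  "pdiff i g x = deriv (\<lambda>t. g (vec (dim_vec x) (\<lambda>j. if j = i then t else x $ j))) (x $ i)"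

definition multi_pdiff :: "nat \<Rightarrow> (nat \<Rightarrow> nat) \<Rightarrow> (complex vec \<Rightarrow> complex) \<Rightarrow> complex vec \<Rightarrow> complex" where
  "multi_pdiff n \<alpha> g = foldr (\<lambda>i h. (pdiff i ^^ \<alpha> i) h) [0..<n] g"

definition diff_op :: "nat \<Rightarrow> coeffs \<Rightarrow> (complex vec \<Rightarrow> complex) \<Rightarrow> complex vec \<Rightarrow> complex" where
  "diff_op n c g x = (\<Sum>\<alpha>\<in>{\<alpha>. c \<alpha> \<noteq> 0}. c \<alpha> * (-1) ^ (\<Sum>i<n. \<alpha> i) * multi_pdiff n \<alpha> g x)"

definition f_fun :: "nat \<Rightarrow> complex mat \<Rightarrow> complex vec \<Rightarrow> complex" where
  "f_fun n \<sigma> x = (if (\<forall>j<n. x \<bullet> col \<sigma> j \<noteq> 0) then det \<sigma> / (\<Prod>j<n. x \<bullet> col \<sigma> j) else 0)"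

definition f_op :: "nat \<Rightarrow> complex mat \<Rightarrow> coeffs \<Rightarrow> complex vec \<Rightarrow> complex" where
  "f_op n \<sigma> P x = (if (\<forall>j<n. x \<bullet> col \<sigma> j \<noteq> 0) then diff_op n P (f_fun n \<sigma>) x else 0)"

definition GL :: "nat \<Rightarrow> complex mat set" where
  "GL n = {A. A \<in> carrier_mat n n \<and> det A \<noteq> 0}"

definition sel_index :: "nat \<Rightarrow> complex mat \<Rightarrow> complex vec \<Rightarrow> nat" where
  "sel_index n A x = (LEAST j. j < n \<and> x \<bullet> col A j \<noteq> 0)"

text \<open>psi for an n-tuple (As 0, ..., As (n-1)) (= (A_1,...,A_n) in the paper).\<close>
definition psi :: "nat \<Rightarrow> (nat \<Rightarrow> complex mat) \<Rightarrow> coeffs \<Rightarrow> complex vec \<Rightarrow> complex" where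
  "psi n As P x = (if x = 0\<^sub>v n then 0 else
     f_op n (mat n n (\<lambda>(i, k). col (As k) (sel_index n (As k) x) $ i)) P x)"

end

theory Submission
  imports Defs
begin

text \<open>
  \<open>f(\<sigma>)\<close> is a product of reciprocals of linear forms. Such functions are represented by a small
  expression language that is closed under directional derivatives, so \<open>P(-\<partial>) f(\<sigma>)\<close> can be
  computed symbolically; derivatives in that language commute and are linear in the direction.

  Equivariance is the chain rule: \<open>f(A\<sigma>)(x) = det A \<cdot> f(\<sigma>)(xA)\<close>, the columns selected for
  \<open>A\<AA>\<close> at \<open>x\<close> are \<open>A\<close> times those selected for \<open>\<AA>\<close> at \<open>xA\<close>, and differentiating \<open>g(xA)\<close>
  along the unit vectors of a monomial \<open>y^\<alpha>\<close> expands multilinearly into derivatives of \<open>g\<close>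
  whose coefficients are exactly those of the substituted polynomial \<open>A\<^sup>TP\<close>.

  The cocycle identity already holds for \<open>f\<close>. Let \<open>c\<^sub>0, \<dots>, c\<^sub>n\<close> be the columns selected from
  \<open>A\<^sub>0, \<dots>, A\<^sub>n\<close> at \<open>x\<close> (the same in every term) and \<open>\<sigma>\<^sub>i\<close> the matrix of all \<open>c\<^sub>k\<close> but \<open>c\<^sub>i\<close>.
  Then \<open>\<Prod>\<^sub>k \<langle>x, c\<^sub>k\<rangle> \<cdot> \<Sum>\<^sub>i (-1)^i f(\<sigma>\<^sub>i)(x)\<close> is the Laplace expansion of an \<open>(n+1) \<times> (n+1)\<close>
  determinant whose first row \<open>\<langle>x, c\<^sub>k\<rangle>\<close> is a combination of the other rows. The alternating
  sum vanishes on an open set around \<open>x\<close>, hence so do all its derivatives.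
\<close>

section \<open>Rational expressions and their symbolic derivatives\<close>

datatype rexpr = Cst complex | Lin "complex vec" | Inv "complex vec"
  | Add rexpr rexpr | Mul rexpr rexpr | Smul complex rexpr

primrec reval :: "rexpr \<Rightarrow> complex vec \<Rightarrow> complex" where
  "reval (Cst c) y = c"
| "reval (Lin v) y = y \<bullet> v"
| "reval (Inv v) y = inverse (y \<bullet> v)"
| "reval (Add a b) y = reval a y + reval b y"
| "reval (Mul a b) y = reval a y * reval b y"
| "reval (Smul c a) y = c * reval a y"

primrec rderiv :: "complex vec \<Rightarrow> rexpr \<Rightarrow> rexpr" where
  "rderiv u (Cst c) = Cst 0"
| "rderiv u (Lin v) = Cst (u \<bullet> v)"
| "rderiv u (Inv v) = Smul (-(u \<bullet> v)) (Mul (Inv v) (Inv v))"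
| "rderiv u (Add a b) = Add (rderiv u a) (rderiv u b)"
| "rderiv u (Mul a b) = Add (Mul (rderiv u a) b) (Mul a (rderiv u b))"
| "rderiv u (Smul c a) = Smul c (rderiv u a)"

abbreviation rderivs :: "complex vec list \<Rightarrow> rexpr \<Rightarrow> rexpr" where
  "rderivs us \<equiv> fold rderiv us"

primrec poles :: "rexpr \<Rightarrow> complex vec set" where
  "poles (Cst c) = {}"
| "poles (Lin v) = {}"
| "poles (Inv v) = {v}"
| "poles (Add a b) = poles a \<union> poles b"
| "poles (Mul a b) = poles a \<union> poles b"
| "poles (Smul c a) = poles a"

primrec rexpr_dim :: "nat \<Rightarrow> rexpr \<Rightarrow> bool" where
  "rexpr_dim n (Cst c) = True"
| "rexpr_dim n (Lin v) = (v \<in> carrier_vec n)"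
| "rexpr_dim n (Inv v) = (v \<in> carrier_vec n)"
| "rexpr_dim n (Add a b) = (rexpr_dim n a \<and> rexpr_dim n b)"
| "rexpr_dim n (Mul a b) = (rexpr_dim n a \<and> rexpr_dim n b)"
| "rexpr_dim n (Smul c a) = rexpr_dim n a"

definition rdom :: "nat \<Rightarrow> rexpr \<Rightarrow> complex vec set" where
  "rdom n e = {y \<in> carrier_vec n. \<forall>v\<in>poles e. y \<bullet> v \<noteq> 0}"

lemma poles_rderiv: "poles (rderiv u e) \<subseteq> poles e"
  by (induction e) auto

lemma rexpr_dim_rderiv: "rexpr_dim n e \<Longrightarrow> rexpr_dim n (rderiv u e)"
  by (induction e) auto

lemma rexpr_dim_rderivs: "rexpr_dim n e \<Longrightarrow> rexpr_dim n (rderivs us e)"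
  using rexpr_dim_rderiv by (induction us arbitrary: e) auto

lemma rdom_rderiv: "rdom n e \<subseteq> rdom n (rderiv u e)"
  using poles_rderiv unfolding rdom_def by blast

lemma rdom_rderivs: "rdom n e \<subseteq> rdom n (rderivs us e)"
  using rdom_rderiv by (induction us arbitrary: e) (auto, blast)

lemma finite_poles: "finite (poles e)"
  by (induction e) auto

lemma poles_carrier: "rexpr_dim n e \<Longrightarrow> v \<in> poles e \<Longrightarrow> v \<in> carrier_vec n"
  by (induction e) auto

lemma scalar_prod_line:
  assumes "y \<in> carrier_vec n" "u \<in> carrier_vec n" "v \<in> carrier_vec n"
  shows "(y + t \<cdot>\<^sub>v u) \<bullet> v = y \<bullet> v + t * (u \<bullet> v)"
  using assms by (simp add: add_scalar_prod_distrib[of _ n])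

lemma has_field_derivative_reval_line:
  assumes "rexpr_dim n e" "y \<in> rdom n e" "u \<in> carrier_vec n"
  shows "((\<lambda>t. reval e (y + t \<cdot>\<^sub>v u)) has_field_derivative reval (rderiv u e) y) (at 0)"
  using assms
proof (induction e)
  case (Lin v)
  have y: "y \<in> carrier_vec n" using Lin unfolding rdom_def by auto
  have "((\<lambda>t. y \<bullet> v + t * (u \<bullet> v)) has_field_derivative (u \<bullet> v)) (at 0)"
    by (auto intro!: derivative_eq_intros)
  then show ?case using Lin y by (simp add: scalar_prod_line[of _ n])
next
  case (Inv v)
  have y: "y \<in> carrier_vec n" and nz: "y \<bullet> v \<noteq> 0" using Inv unfolding rdom_def by auto
  have "((\<lambda>t. inverse (y \<bullet> v + t * (u \<bullet> v))) has_field_derivative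
      (-(u \<bullet> v) * (inverse (y \<bullet> v) * inverse (y \<bullet> v)))) (at 0)"
    using nz by (auto intro!: derivative_eq_intros simp: field_simps power2_eq_square)
  then show ?case using Inv y by (simp add: scalar_prod_line[of _ n])
next
  case (Mul a b)
  then have "y \<in> rdom n a" "y \<in> rdom n b" "y + 0 \<cdot>\<^sub>v u = y" unfolding rdom_def by auto
  then show ?case using Mul by (auto intro!: derivative_eq_intros)
qed (auto simp: rdom_def intro!: derivative_eq_intros)

lemma eventually_line_in_rdom:
  assumes "rexpr_dim n e" "y \<in> rdom n e" "u \<in> carrier_vec n"
  shows "eventually (\<lambda>t. y + t \<cdot>\<^sub>v u \<in> rdom n e) (nhds 0)"
proof -
  have y: "y \<in> carrier_vec n" using assms unfolding rdom_def by auto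
  have "eventually (\<lambda>t. (y + t \<cdot>\<^sub>v u) \<bullet> v \<noteq> 0) (nhds 0)" if v: "v \<in> poles e" for v
  proof -
    have "((\<lambda>t. y \<bullet> v + t * (u \<bullet> v)) \<longlongrightarrow> y \<bullet> v + 0 * (u \<bullet> v)) (nhds 0)"
      by (intro tendsto_intros) (rule filterlim_ident)
    then have "eventually (\<lambda>t. y \<bullet> v + t * (u \<bullet> v) \<noteq> 0) (nhds 0)"
      using assms(2) v unfolding rdom_def by (intro tendsto_imp_eventually_ne) auto
    then show ?thesis
      using v poles_carrier[OF assms(1)] y assms(3) by (simp add: scalar_prod_line[of _ n])
  qed
  then have "eventually (\<lambda>t. \<forall>v\<in>poles e. (y + t \<cdot>\<^sub>v u) \<bullet> v \<noteq> 0) (nhds 0)"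
    by (simp add: eventually_ball_finite_distrib finite_poles)
  then show ?thesis unfolding rdom_def using y assms(3)
    by (auto elim!: eventually_mono)
qed

text \<open>Derivatives are local: \<open>rdom n E\<close> is open, so agreement there is inherited by all
  derivatives.\<close>
lemma reval_rderivs_cong:
  assumes "rexpr_dim n X" "rexpr_dim n Y" "rexpr_dim n E" "rdom n E \<subseteq> rdom n X" "rdom n E \<subseteq> rdom n Y"
    "\<forall>z\<in>rdom n E. reval X z = reval Y z" "set us \<subseteq> carrier_vec n"
  shows "\<forall>z\<in>rdom n E. reval (rderivs us X) z = reval (rderivs us Y) z"
  using assms
proof (induction us arbitrary: X Y)
  case (Cons u us)
  have u: "u \<in> carrier_vec n" using Cons.prems by auto
  have "reval (rderiv u X) z = reval (rderiv u Y) z" if z: "z \<in> rdom n E" for z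
  proof -
    have dX: "((\<lambda>t. reval X (z + t \<cdot>\<^sub>v u)) has_field_derivative reval (rderiv u X) z) (at 0)"
      using has_field_derivative_reval_line[OF Cons.prems(1) _ u] z Cons.prems(4) by auto
    have dY: "((\<lambda>t. reval Y (z + t \<cdot>\<^sub>v u)) has_field_derivative reval (rderiv u Y) z) (at 0)"
      using has_field_derivative_reval_line[OF Cons.prems(2) _ u] z Cons.prems(5) by auto
    have agree: "eventually (\<lambda>t. reval X (z + t \<cdot>\<^sub>v u) = reval Y (z + t \<cdot>\<^sub>v u)) (nhds 0)"
      using eventually_line_in_rdom[OF Cons.prems(3) z u] Cons.prems(6) by (auto elim!: eventually_mono)
    have "((\<lambda>t. reval X (z + t \<cdot>\<^sub>v u)) has_field_derivative reval (rderiv u Y) z) (at 0)"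
      using dY DERIV_cong_ev[OF refl agree refl] by simp
    then show ?thesis using dX DERIV_unique by blast
  qed
  moreover have "rdom n E \<subseteq> rdom n (rderiv u X)" "rdom n E \<subseteq> rdom n (rderiv u Y)"
    using Cons.prems rdom_rderiv by blast+
  ultimately show ?case using Cons.IH[of "rderiv u X" "rderiv u Y"] Cons.prems rexpr_dim_rderiv by simp
qed simp

lemma reval_rderiv_commute: "reval (rderiv u (rderiv w e)) y = reval (rderiv w (rderiv u e)) y"
proof (induction e)
  case (Mul a b)
  then show ?case by (simp add: distrib_left distrib_right mult.commute mult.left_commute)
qed (simp_all add: mult.commute mult.left_commute)

lemma reval_rderiv_linear:
  assumes "rexpr_dim n e" "u \<in> carrier_vec n"
  shows "reval (rderiv u e) y = (\<Sum>k<n. u $ k * reval (rderiv (unit_vec n k) e) y)"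
  using assms(1)
proof (induction e)
  case (Lin v)
  then show ?case using assms(2) by (auto simp: scalar_prod_def[of u v] atLeast0LessThan intro!: sum.cong)
next
  case (Inv v)
  have "u \<bullet> v = (\<Sum>k<n. u $ k * v $ k)" using Inv assms(2) by (simp add: scalar_prod_def atLeast0LessThan)
  then show ?case using Inv by (simp add: sum_distrib_right sum_negf mult.assoc)
next
  case (Add a b)
  then show ?case by (simp add: sum.distrib distrib_left)
next
  case (Mul a b)
  then show ?case
    by (simp add: sum.distrib distrib_left sum_distrib_left sum_distrib_right mult.assoc mult.left_commute)
next
  case (Smul c a)
  then show ?case by (simp add: sum_distrib_left mult.left_commute)
qed simp

primrec rsum :: "rexpr list \<Rightarrow> rexpr" where
  "rsum [] = Cst 0"
| "rsum (e # es) = Add e (rsum es)"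

primrec rprod :: "rexpr list \<Rightarrow> rexpr" where
  "rprod [] = Cst 1"
| "rprod (e # es) = Mul e (rprod es)"

lemma reval_rsum: "reval (rsum es) y = sum_list (map (\<lambda>e. reval e y) es)"
  by (induction es) auto

lemma rderivs_rsum: "rderivs us (rsum es) = rsum (map (rderivs us) es)"
proof -
  have "rderiv u (rsum es) = rsum (map (rderiv u) es)" for u es
    by (induction es) auto
  then show ?thesis by (induction us arbitrary: es) (simp_all add: comp_def)
qed

lemma rderivs_Smul: "rderivs us (Smul c X) = Smul c (rderivs us X)"
  by (induction us arbitrary: X) auto

lemma reval_rderivs_Cst0: "reval (rderivs us (Cst 0)) y = 0"
  by (induction us) auto

lemma poles_rsum: "poles (rsum es) = (\<Union>e\<in>set es. poles e)"
  by (induction es) auto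

lemma rexpr_dim_rsum: "rexpr_dim n (rsum es) = (\<forall>e\<in>set es. rexpr_dim n e)"
  by (induction es) auto

lemma reval_rprod: "reval (rprod es) y = prod_list (map (\<lambda>e. reval e y) es)"
  by (induction es) auto

lemma poles_rprod: "poles (rprod es) = (\<Union>e\<in>set es. poles e)"
  by (induction es) auto

lemma rexpr_dim_rprod: "rexpr_dim n (rprod es) = (\<forall>e\<in>set es. rexpr_dim n e)"
  by (induction es) auto

lemma reval_rsum_upt:
  "reval (rsum (map (\<lambda>k. Smul (c k) (e k)) [0..<m])) y = (\<Sum>k<m. c k * reval (e k) y)"
  by (simp add: reval_rsum comp_def lessThan_atLeast0 interv_sum_list_conv_sum_set_nat)

lemma reval_rderivs_rderiv_linear:
  assumes "rexpr_dim n Z" "u \<in> carrier_vec n" "set us \<subseteq> carrier_vec n" "y \<in> rdom n Z"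
  shows "reval (rderivs us (rderiv u Z)) y = (\<Sum>k<n. u $ k * reval (rderivs us (rderiv (unit_vec n k) Z)) y)"
proof -
  define Y where "Y = rsum (map (\<lambda>k. Smul (u $ k) (rderiv (unit_vec n k) Z)) [0..<n])"
  have dim_Y: "rexpr_dim n Y" unfolding Y_def rexpr_dim_rsum using rexpr_dim_rderiv[OF assms(1)] by auto
  have dom_Y: "rdom n Z \<subseteq> rdom n Y"
    unfolding Y_def rdom_def poles_rsum using poles_rderiv by fastforce
  have "\<forall>z\<in>rdom n Z. reval (rderiv u Z) z = reval Y z"
    unfolding Y_def reval_rsum_upt using reval_rderiv_linear[OF assms(1,2)] by simp
  then have "reval (rderivs us (rderiv u Z)) y = reval (rderivs us Y) y"
    using reval_rderivs_cong[OF rexpr_dim_rderiv[OF assms(1)] dim_Y assms(1) rdom_rderiv dom_Y _ assms(3)]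
      assms(4) by blast
  also have "\<dots> = (\<Sum>k<n. u $ k * reval (rderivs us (rderiv (unit_vec n k) Z)) y)"
    unfolding Y_def rderivs_rsum by (simp add: comp_def rderivs_Smul reval_rsum_upt)
  finally show ?thesis .
qed

definition index_lists :: "nat \<Rightarrow> nat \<Rightarrow> nat list set" where
  "index_lists n m = {is. set is \<subseteq> {..<n} \<and> length is = m}"

lemma finite_index_lists: "finite (index_lists n m)"
  unfolding index_lists_def by (rule finite_lists_length_eq) simp

lemma index_lists_0: "index_lists n 0 = {[]}"
  unfolding index_lists_def by auto

lemma sum_index_lists_Suc:
  "(\<Sum>is\<in>index_lists n (Suc m). f is) = (\<Sum>is\<in>index_lists n m. \<Sum>k<n. f (k # is))"
proof -
  have Suc: "index_lists n (Suc m) = (\<lambda>(xs, k). k # xs) ` (index_lists n m \<times> {..<n})"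
    unfolding index_lists_def by (rule lists_length_Suc_eq)
  have inj: "inj_on (\<lambda>(xs, k). k # xs) (index_lists n m \<times> {..<n})"
    by (auto simp: inj_on_def)
  show ?thesis unfolding Suc sum.reindex[OF inj] sum.cartesian_product
    by (rule sum.cong) auto
qed

lemma prod_sum_eq_sum_index_lists:
  "(\<Prod>j<m. \<Sum>k<n. f j k) = (\<Sum>is\<in>index_lists n m. \<Prod>j<m. f j (is ! j))"
  for f :: "nat \<Rightarrow> nat \<Rightarrow> 'a::comm_semiring_1"
proof (induction m arbitrary: f)
  case (Suc m)
  have "(\<Prod>j<Suc m. \<Sum>k<n. f j k) = (\<Sum>k<n. f 0 k) * (\<Prod>j<m. \<Sum>k<n. f (Suc j) k)"
    by (simp del: prod.lessThan_Suc add: prod.lessThan_Suc_shift)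
  also have "\<dots> = (\<Sum>k<n. f 0 k) * (\<Sum>is\<in>index_lists n m. \<Prod>j<m. f (Suc j) (is ! j))"
    using Suc[of "\<lambda>j. f (Suc j)"] by simp
  also have "\<dots> = (\<Sum>is\<in>index_lists n (Suc m). \<Prod>j<Suc m. f j (is ! j))"
    unfolding sum_index_lists_Suc
    by (simp del: prod.lessThan_Suc add: prod.lessThan_Suc_shift sum_distrib_left sum_distrib_right
        sum.swap[of _ "{..<n}"])
  finally show ?case .
qed (simp add: index_lists_0)

lemma reval_rderivs_multilinear:
  assumes "set us \<subseteq> carrier_vec n" "rexpr_dim n e" "y \<in> rdom n e"
  shows "reval (rderivs us e) y = (\<Sum>is\<in>index_lists n (length us).
     (\<Prod>j<length us. us ! j $ (is ! j)) * reval (rderivs (map (unit_vec n) is) e) y)"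
  using assms
proof (induction us arbitrary: e)
  case (Cons u us)
  have u: "u \<in> carrier_vec n" using Cons.prems by auto
  have "reval (rderivs (u # us) e) y = reval (rderivs us (rderiv u e)) y" by simp
  also have "\<dots> = (\<Sum>is\<in>index_lists n (length us). (\<Prod>j<length us. us ! j $ (is ! j)) *
      reval (rderivs (map (unit_vec n) is) (rderiv u e)) y)"
    using Cons.IH[of "rderiv u e"] Cons.prems rexpr_dim_rderiv rdom_rderiv[THEN subsetD] by simp
  also have "\<dots> = (\<Sum>is\<in>index_lists n (length us). (\<Prod>j<length us. us ! j $ (is ! j)) *
      (\<Sum>k<n. u $ k * reval (rderivs (map (unit_vec n) is) (rderiv (unit_vec n k) e)) y))"
    by (intro sum.cong refl arg_cong[where f="\<lambda>z. _ * z"]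
        reval_rderivs_rderiv_linear[OF Cons.prems(2) u _ Cons.prems(3)]) auto
  also have "\<dots> = (\<Sum>is\<in>index_lists n (Suc (length us)).
     (\<Prod>j<Suc (length us). (u # us) ! j $ (is ! j)) * reval (rderivs (map (unit_vec n) is) e) y)"
    unfolding sum_index_lists_Suc
    by (simp del: prod.lessThan_Suc add: prod.lessThan_Suc_shift sum_distrib_left mult_ac)
  finally show ?case by simp
qed (simp add: index_lists_0)

lemma reval_rderivs_swap:
  assumes "rexpr_dim n e" "y \<in> rdom n e" "set (us1 @ a # b # us2) \<subseteq> carrier_vec n"
  shows "reval (rderivs (us1 @ a # b # us2) e) y = reval (rderivs (us1 @ b # a # us2) e) y"
proof -
  define Z where "Z = rderivs us1 e"
  have dim_Z: "rexpr_dim n Z" unfolding Z_def using rexpr_dim_rderivs assms by auto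
  have dom_Z: "rdom n e \<subseteq> rdom n Z" unfolding Z_def by (rule rdom_rderivs)
  have "\<forall>z\<in>rdom n e. reval (rderivs us2 (rderiv b (rderiv a Z))) z
      = reval (rderivs us2 (rderiv a (rderiv b Z))) z"
  proof (rule reval_rderivs_cong)
    show "rdom n e \<subseteq> rdom n (rderiv b (rderiv a Z))" "rdom n e \<subseteq> rdom n (rderiv a (rderiv b Z))"
      using dom_Z rdom_rderiv by blast+
  qed (use assms dim_Z rexpr_dim_rderiv reval_rderiv_commute in auto)
  then show ?thesis using assms(2) unfolding Z_def by simp
qed

lemma reval_rderivs_move_front:
  assumes "rexpr_dim n e" "y \<in> rdom n e" "set (us1 @ a # us2) \<subseteq> carrier_vec n"
  shows "reval (rderivs (us1 @ a # us2) e) y = reval (rderivs (a # us1 @ us2) e) y"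
  using assms(3)
proof (induction us1 arbitrary: us2 rule: rev_induct)
  case (snoc x xs)
  have "reval (rderivs ((xs @ [x]) @ a # us2) e) y = reval (rderivs (xs @ a # x # us2) e) y"
    using reval_rderivs_swap[OF assms(1,2)] snoc.prems by auto
  also have "\<dots> = reval (rderivs (a # xs @ x # us2) e) y"
    using snoc.IH[of "x # us2"] snoc.prems by auto
  finally show ?case by simp
qed simp

lemma reval_rderivs_perm:
  assumes "mset us = mset vs" "rexpr_dim n e" "y \<in> rdom n e" "set us \<subseteq> carrier_vec n"
  shows "reval (rderivs us e) y = reval (rderivs vs e) y"
  using assms
proof (induction us arbitrary: e vs)
  case (Cons a us)
  have "a \<in> set vs" using Cons.prems(1) by (metis list.set_intros(1) set_mset_mset)
  then obtain vs1 vs2 where vs: "vs = vs1 @ a # vs2" by (meson split_list)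
  have "set vs \<subseteq> carrier_vec n" using Cons.prems(1,4) by (metis set_mset_mset)
  then have "reval (rderivs vs e) y = reval (rderivs (vs1 @ vs2) (rderiv a e)) y"
    using reval_rderivs_move_front[OF Cons.prems(2,3)] vs by auto
  also have "\<dots> = reval (rderivs us (rderiv a e)) y"
    using Cons.IH[of "vs1 @ vs2" "rderiv a e"] Cons.prems vs rexpr_dim_rderiv
      rdom_rderiv[THEN subsetD] by auto
  finally show ?case by simp
qed simp

section \<open>Partial derivatives of rational expressions\<close>

text \<open>The monomial \<open>y^\<alpha>\<close> as the word \<open>0^(\<alpha> 0) 1^(\<alpha> 1) \<dots>\<close> of variable indices.\<close>
definition monomial_word :: "nat \<Rightarrow> (nat \<Rightarrow> nat) \<Rightarrow> nat list" where
  "monomial_word n \<alpha> = concat (map (\<lambda>i. replicate (\<alpha> i) i) [0..<n])"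

abbreviation monomial_dirs :: "nat \<Rightarrow> (nat \<Rightarrow> nat) \<Rightarrow> complex vec list" where
  "monomial_dirs n \<alpha> \<equiv> map (unit_vec n) (monomial_word n \<alpha>)"

lemma monomial_word_0 [simp]: "monomial_word 0 \<alpha> = []"
  by (simp add: monomial_word_def)

lemma monomial_word_Suc: "monomial_word (Suc n) \<alpha> = monomial_word n \<alpha> @ replicate (\<alpha> n) n"
  by (simp add: monomial_word_def)

lemma set_monomial_word: "set (monomial_word n \<alpha>) \<subseteq> {..<n}"
  unfolding monomial_word_def by auto

lemma length_monomial_word: "length (monomial_word n \<alpha>) = (\<Sum>i<n. \<alpha> i)"
  by (induction n) (simp_all add: monomial_word_def)

lemma count_monomial_word: "count_list (monomial_word n \<alpha>) k = (if k < n then \<alpha> k else 0)"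
proof -
  have "count_list (replicate m i) k = (if k = i then m else 0)" for m i :: nat
    by (induction m) auto
  then show ?thesis by (induction n) (auto simp: monomial_word_Suc)
qed

lemma prod_monomial_word: "(\<Prod>i<n. z i ^ \<alpha> i) = prod_list (map z (monomial_word n \<alpha>))"
  for z :: "nat \<Rightarrow> 'a::comm_monoid_mult"
  by (induction n) (simp_all add: monomial_word_Suc)

lemma multi_pdiff_eq_foldr: "multi_pdiff n \<alpha> g = foldr pdiff (monomial_word n \<alpha>) g"
proof -
  have "foldr (\<lambda>i h. (pdiff i ^^ \<alpha> i) h) xs g = foldr pdiff (concat (map (\<lambda>i. replicate (\<alpha> i) i) xs)) g"
    for xs by (induction xs) (auto simp: foldr_replicate)
  then show ?thesis unfolding multi_pdiff_def monomial_word_def by simp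
qed

lemma vec_coord_update:
  assumes "(y::complex vec) \<in> carrier_vec n" "i < n"
  shows "vec (dim_vec y) (\<lambda>j. if j = i then t else y $ j) = y + (t - y $ i) \<cdot>\<^sub>v unit_vec n i"
  using assms by (intro eq_vecI) (auto simp: unit_vec_def algebra_simps)

lemma pdiff_cong_rdom:
  assumes "\<forall>z\<in>rdom n e. G z = H z" "rexpr_dim n e" "y \<in> rdom n e" "i < n"
  shows "pdiff i G y = pdiff i H y"
proof -
  have y: "y \<in> carrier_vec n" using assms unfolding rdom_def by auto
  have "eventually (\<lambda>s. y + s \<cdot>\<^sub>v unit_vec n i \<in> rdom n e) (filtermap (\<lambda>t. t - y $ i) (nhds (y $ i)))"
    using eventually_line_in_rdom[OF assms(2,3)] filtermap_nhds_shift[of "y $ i" "y $ i"] by simp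
  then have "eventually (\<lambda>t. y + (t - y $ i) \<cdot>\<^sub>v unit_vec n i \<in> rdom n e) (nhds (y $ i))"
    by (simp add: eventually_filtermap)
  then have "eventually (\<lambda>t. G (vec (dim_vec y) (\<lambda>j. if j = i then t else y $ j))
      = H (vec (dim_vec y) (\<lambda>j. if j = i then t else y $ j))) (nhds (y $ i))"
    by (auto elim!: eventually_mono simp: vec_coord_update[OF y assms(4)] assms(1))
  then show ?thesis unfolding pdiff_def by (rule deriv_cong_ev) simp
qed

lemma pdiff_reval:
  assumes "rexpr_dim n e" "y \<in> rdom n e" "i < n"
  shows "pdiff i (reval e) y = reval (rderiv (unit_vec n i) e) y"
proof -
  have y: "y \<in> carrier_vec n" using assms unfolding rdom_def by auto
  have "((\<lambda>s. reval e (y + s \<cdot>\<^sub>v unit_vec n i)) has_field_derivative reval (rderiv (unit_vec n i) e) y)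
      (at (y $ i - y $ i))"
    using has_field_derivative_reval_line[OF assms(1,2)] by simp
  then have "((\<lambda>t. reval e (y + (t - y $ i) \<cdot>\<^sub>v unit_vec n i)) has_field_derivative
      reval (rderiv (unit_vec n i) e) y * 1) (at (y $ i))"
    by (rule DERIV_chain2[where g="\<lambda>t. t - y $ i"]) (auto intro!: derivative_eq_intros)
  then show ?thesis unfolding pdiff_def vec_coord_update[OF y assms(3)]
    by (intro DERIV_imp_deriv) simp
qed

lemma foldr_pdiff_reval:
  assumes "rexpr_dim n e" "set is \<subseteq> {..<n}"
  shows "\<forall>y\<in>rdom n e. foldr pdiff is (reval e) y = reval (rderivs (map (unit_vec n) (rev is)) e) y"
  using assms(2)
proof (induction "is")
  case (Cons i "is")
  let ?E = "rderivs (map (unit_vec n) (rev is)) e"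
  show ?case
  proof
    fix y assume y: "y \<in> rdom n e"
    have "foldr pdiff (i # is) (reval e) y = pdiff i (reval ?E) y"
      using pdiff_cong_rdom[OF _ assms(1) y] Cons by auto
    also have "\<dots> = reval (rderiv (unit_vec n i) ?E) y"
      using pdiff_reval[OF rexpr_dim_rderivs[OF assms(1)] rdom_rderivs[THEN subsetD, OF y]] Cons by auto
    finally show "foldr pdiff (i # is) (reval e) y = reval (rderivs (map (unit_vec n) (rev (i # is))) e) y"
      by simp
  qed
qed simp

lemma multi_pdiff_reval:
  assumes "rexpr_dim n e" "y \<in> rdom n e"
  shows "multi_pdiff n \<alpha> (reval e) y = reval (rderivs (monomial_dirs n \<alpha>) e) y"
proof -
  have "multi_pdiff n \<alpha> (reval e) y = reval (rderivs (map (unit_vec n) (rev (monomial_word n \<alpha>))) e) y"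
    using foldr_pdiff_reval[OF assms(1) set_monomial_word] assms(2) by (simp add: multi_pdiff_eq_foldr)
  also have "\<dots> = reval (rderivs (monomial_dirs n \<alpha>) e) y"
    using assms set_monomial_word by (intro reval_rderivs_perm) (auto simp: rev_map[symmetric])
  finally show ?thesis .
qed

lemma diff_op_reval:
  assumes "rexpr_dim n e" "y \<in> rdom n e"
  shows "diff_op n P (reval e) y
    = (\<Sum>\<alpha>\<in>{\<alpha>. P \<alpha> \<noteq> 0}. P \<alpha> * (-1) ^ (\<Sum>i<n. \<alpha> i) * reval (rderivs (monomial_dirs n \<alpha>) e) y)"
  unfolding diff_op_def using multi_pdiff_reval[OF assms] by simp

section \<open>The function \<open>f(\<sigma>)\<close> and its alternating sum\<close>

definition f_rexpr :: "nat \<Rightarrow> complex mat \<Rightarrow> rexpr" where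
  "f_rexpr n \<sigma> = Smul (det \<sigma>) (rprod (map (\<lambda>j. Inv (col \<sigma> j)) [0..<n]))"

lemma prod_list_map_upt: "prod_list (map g [0..<n]) = (\<Prod>j<n. g j)"
  using prod.distinct_set_conv_list[of "[0..<n]" g] by (simp add: lessThan_atLeast0)

lemma reval_f_rexpr: "reval (f_rexpr n \<sigma>) y = det \<sigma> * (\<Prod>j<n. inverse (y \<bullet> col \<sigma> j))"
  unfolding f_rexpr_def by (simp add: reval_rprod comp_def prod_list_map_upt)

text \<open>Off the poles both sides vanish, since \<open>inverse 0 = 0\<close>.\<close>
lemma f_fun_eq_reval: "f_fun n \<sigma> = reval (f_rexpr n \<sigma>)"
proof
  fix y
  show "f_fun n \<sigma> y = reval (f_rexpr n \<sigma>) y"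
  proof (cases "\<forall>j<n. y \<bullet> col \<sigma> j \<noteq> 0")
    case True
    then show ?thesis unfolding f_fun_def reval_f_rexpr
      using prod_inversef[of "\<lambda>j. y \<bullet> col \<sigma> j" "{..<n}"] by (simp add: divide_inverse)
  next
    case False
    then have "(\<Prod>j<n. inverse (y \<bullet> col \<sigma> j)) = 0" by (auto intro!: prod_zero)
    then show ?thesis unfolding f_fun_def reval_f_rexpr using False by auto
  qed
qed

lemma rexpr_dim_f_rexpr: "\<sigma> \<in> carrier_mat n n \<Longrightarrow> rexpr_dim n (f_rexpr n \<sigma>)"
  unfolding f_rexpr_def by (auto simp: rexpr_dim_rprod)

lemma poles_f_rexpr: "poles (f_rexpr n \<sigma>) = col \<sigma> ` {..<n}"
  unfolding f_rexpr_def by (auto simp: poles_rprod)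

lemma rdom_f_rexpr: "rdom n (f_rexpr n \<sigma>) = {y \<in> carrier_vec n. \<forall>j<n. y \<bullet> col \<sigma> j \<noteq> 0}"
  unfolding rdom_def poles_f_rexpr by auto

definition skip_index :: "nat \<Rightarrow> nat \<Rightarrow> nat" where
  "skip_index i j = (if j < i then j else Suc j)"

definition omit_col_mat :: "nat \<Rightarrow> (nat \<Rightarrow> complex vec) \<Rightarrow> nat \<Rightarrow> complex mat" where
  "omit_col_mat n c i = mat n n (\<lambda>(r, k). c (skip_index i k) $ r)"

lemma omit_col_mat_carrier: "omit_col_mat n c i \<in> carrier_mat n n"
  unfolding omit_col_mat_def by auto

lemma col_omit_col_mat:
  assumes "\<forall>k\<le>n. c k \<in> carrier_vec n" "i \<le> n" "j < n"
  shows "col (omit_col_mat n c i) j = c (skip_index i j)"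
proof -
  have "skip_index i j \<le> n" using assms unfolding skip_index_def by auto
  then show ?thesis unfolding omit_col_mat_def using assms by (auto intro!: eq_vecI)
qed

lemma bij_betw_skip_index:
  assumes "i \<le> n"
  shows "bij_betw (skip_index i) {..<n} ({..<Suc n} - {i})"
proof (rule bij_betw_imageI)
  show "inj_on (skip_index i) {..<n}" unfolding inj_on_def skip_index_def by auto
  show "skip_index i ` {..<n} = {..<Suc n} - {i}"
  proof
    show "skip_index i ` {..<n} \<subseteq> {..<Suc n} - {i}" unfolding skip_index_def by auto
    show "{..<Suc n} - {i} \<subseteq> skip_index i ` {..<n}"
    proof
      fix k assume k: "k \<in> {..<Suc n} - {i}"
      show "k \<in> skip_index i ` {..<n}"
      proof (cases "k < i")
        case True
        then show ?thesis using assms by (intro rev_image_eqI[of k]) (auto simp: skip_index_def)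
      next
        case False
        then show ?thesis using k by (intro rev_image_eqI[of "k - 1"]) (auto simp: skip_index_def)
      qed
    qed
  qed
qed

lemma prod_skip_index:
  fixes f :: "nat \<Rightarrow> 'a::comm_monoid_mult"
  assumes "i \<le> n"
  shows "(\<Prod>j<n. f (skip_index i j)) * f i = (\<Prod>k<Suc n. f k)"
proof -
  have "(\<Prod>k<Suc n. f k) = f i * (\<Prod>k\<in>{..<Suc n} - {i}. f k)"
    using assms by (intro prod.remove) auto
  also have "(\<Prod>k\<in>{..<Suc n} - {i}. f k) = (\<Prod>j<n. f (skip_index i j))"
    using prod.reindex_bij_betw[OF bij_betw_skip_index[OF assms], of f] by simp
  finally show ?thesis by (simp add: mult.commute)
qed

lemma transpose_mult_vec_eq_zero:
  fixes A :: "'a::idom mat"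
  assumes "A \<in> carrier_mat n n" "det A \<noteq> 0" "x \<in> carrier_vec n" "transpose_mat A *\<^sub>v x = 0\<^sub>v n"
  shows "x = 0\<^sub>v n"
  using assms det_0_iff_vec_prod_zero[of "transpose_mat A" n] det_transpose[OF assms(1)] by auto

text \<open>The first row \<open>y \<bullet> c k\<close> is a linear combination of the others.\<close>
lemma det_bordered_eq_0:
  fixes y :: "complex vec" and c :: "nat \<Rightarrow> complex vec"
  assumes y: "y \<in> carrier_vec n" and c: "\<forall>k\<le>n. c k \<in> carrier_vec n"
  shows "det (mat (Suc n) (Suc n) (\<lambda>(r, k). if r = 0 then y \<bullet> c k else c k $ (r - 1))) = 0"
    (is "det ?M = 0")
proof (rule ccontr)
  assume nz: "det ?M \<noteq> 0"
  define w where "w = vec (Suc n) (\<lambda>r. if r = 0 then 1 else - y $ (r - 1))"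
  have "transpose_mat ?M *\<^sub>v w = 0\<^sub>v (Suc n)"
  proof (rule eq_vecI)
    fix k assume "k < dim_vec (0\<^sub>v (Suc n) :: complex vec)"
    then have k: "k < Suc n" by simp
    have ck: "c k \<in> carrier_vec n" using c k by auto
    have "(transpose_mat ?M *\<^sub>v w) $ k = (\<Sum>r<Suc n. ?M $$ (r, k) * w $ r)"
      using k by (simp add: scalar_prod_def w_def lessThan_atLeast0 mult.commute)
    also have "\<dots> = y \<bullet> c k + (\<Sum>r<n. c k $ r * (- y $ r))"
      using k by (simp del: sum.lessThan_Suc add: sum.lessThan_Suc_shift w_def)
    also have "\<dots> = 0"
      using ck y by (simp add: scalar_prod_def lessThan_atLeast0 sum_negf mult.commute)
    finally show "(transpose_mat ?M *\<^sub>v w) $ k = 0\<^sub>v (Suc n) $ k" using k by simp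
  qed simp
  then have "w = 0\<^sub>v (Suc n)"
    using transpose_mult_vec_eq_zero[of ?M "Suc n" w] nz unfolding w_def by auto
  then have "w $ 0 = 0" by simp
  then show False unfolding w_def by simp
qed

text \<open>Laplace expansion of the singular bordered matrix along its first row.\<close>
lemma f_fun_alternating_sum:
  fixes y :: "complex vec" and c :: "nat \<Rightarrow> complex vec"
  assumes y: "y \<in> carrier_vec n" and c: "\<forall>k\<le>n. c k \<in> carrier_vec n"
    and nz: "\<forall>k\<le>n. y \<bullet> c k \<noteq> 0"
  shows "(\<Sum>i\<le>n. (-1) ^ i * f_fun n (omit_col_mat n c i) y) = 0"
proof -
  define M where "M = mat (Suc n) (Suc n) (\<lambda>(r, k). if r = 0 then y \<bullet> c k else c k $ (r - 1))"
  define Q where "Q = (\<Prod>k<Suc n. y \<bullet> c k)"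
  have Q: "Q \<noteq> 0" unfolding Q_def using nz by (auto simp: less_Suc_eq_le)
  have M: "M \<in> carrier_mat (Suc n) (Suc n)" unfolding M_def by auto
  have minor: "mat_delete M 0 k = omit_col_mat n c k" if "k < Suc n" for k
    unfolding mat_delete_def M_def omit_col_mat_def skip_index_def using that
    by (intro eq_matI) auto
  have entry: "M $$ (0, k) = y \<bullet> c k" if "k < Suc n" for k
    unfolding M_def using that by simp
  have "(\<Sum>k<Suc n. (-1) ^ k * det (omit_col_mat n c k) * (y \<bullet> c k))
      = (\<Sum>k<Suc n. M $$ (0, k) * cofactor M 0 k)"
    by (intro sum.cong refl) (simp add: entry cofactor_def minor mult_ac)
  also have "\<dots> = det M" by (rule laplace_expansion_row[OF M, symmetric]) simp
  also have "\<dots> = 0" using det_bordered_eq_0[OF y c] unfolding M_def .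
  finally have expansion: "(\<Sum>k<Suc n. (-1) ^ k * det (omit_col_mat n c k) * (y \<bullet> c k)) = 0" .
  have summand: "(-1) ^ i * f_fun n (omit_col_mat n c i) y = (-1) ^ i * det (omit_col_mat n c i) * (y \<bullet> c i) / Q"
    if i: "i \<le> n" for i
  proof -
    have cols: "\<forall>j<n. y \<bullet> col (omit_col_mat n c i) j = y \<bullet> c (skip_index i j)"
      using col_omit_col_mat[OF c i] by simp
    have "(\<Prod>j<n. y \<bullet> c (skip_index i j)) = Q / (y \<bullet> c i)"
      using prod_skip_index[OF i, of "\<lambda>k. y \<bullet> c k"] nz i unfolding Q_def by (simp add: field_simps)
    moreover have "\<forall>j<n. y \<bullet> c (skip_index i j) \<noteq> 0"
      using nz i by (auto simp: skip_index_def)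
    ultimately show ?thesis unfolding f_fun_def using cols Q nz i by (simp add: field_simps)
  qed
  have "(\<Sum>i\<le>n. (-1) ^ i * f_fun n (omit_col_mat n c i) y)
      = (\<Sum>i<Suc n. (-1) ^ i * det (omit_col_mat n c i) * (y \<bullet> c i)) / Q"
    using summand by (simp add: lessThan_Suc_atMost sum_divide_distrib)
  then show ?thesis using expansion by simp
qed

lemma reval_rderivs_f_rexpr_alternating_sum:
  fixes x :: "complex vec" and c :: "nat \<Rightarrow> complex vec"
  assumes x: "x \<in> carrier_vec n" and c: "\<forall>k\<le>n. c k \<in> carrier_vec n"
    and nz: "\<forall>k\<le>n. x \<bullet> c k \<noteq> 0" and us: "set us \<subseteq> carrier_vec n"
  shows "(\<Sum>i\<le>n. (-1) ^ i * reval (rderivs us (f_rexpr n (omit_col_mat n c i))) x) = 0"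
proof -
  define Z where "Z = rsum (map (\<lambda>i. Smul ((-1) ^ i) (f_rexpr n (omit_col_mat n c i))) [0..<Suc n])"
  \<comment> \<open>\<open>E\<close> only serves to describe the open set where all \<open>z \<bullet> c k\<close> are nonzero.\<close>
  define E where "E = rprod (map (\<lambda>k. Inv (c k)) [0..<Suc n])"
  have dom_E: "rdom n E = {z \<in> carrier_vec n. \<forall>k\<le>n. z \<bullet> c k \<noteq> 0}"
    unfolding rdom_def E_def poles_rprod by (auto simp: less_Suc_eq_le)
  have dim_E: "rexpr_dim n E" unfolding E_def rexpr_dim_rprod using c by (auto simp: less_Suc_eq_le)
  have dim_Z: "rexpr_dim n Z" unfolding Z_def rexpr_dim_rsum using rexpr_dim_f_rexpr[OF omit_col_mat_carrier] by auto
  have "col (omit_col_mat n c i) j \<in> c ` {..n}" if "i \<le> n" "j < n" for i j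
    using col_omit_col_mat[OF c that] that by (auto simp: skip_index_def)
  then have "poles Z \<subseteq> c ` {..n}"
    unfolding Z_def poles_rsum by (auto simp: less_Suc_eq_le poles_f_rexpr)
  then have dom_Z: "rdom n E \<subseteq> rdom n Z" unfolding dom_E unfolding rdom_def by auto
  have "reval Z z = reval (Cst 0) z" if "z \<in> rdom n E" for z
    using f_fun_alternating_sum[of z n c] that c unfolding Z_def dom_E reval_rsum_upt
    by (simp add: f_fun_eq_reval lessThan_Suc_atMost)
  then have "reval (rderivs us Z) x = reval (rderivs us (Cst 0)) x"
    using reval_rderivs_cong[OF dim_Z _ dim_E dom_Z _ _ us] x nz unfolding dom_E by (auto simp: rdom_def)
  then show ?thesis unfolding Z_def rderivs_rsum
    by (simp add: comp_def rderivs_Smul reval_rsum_upt reval_rderivs_Cst0 lessThan_Suc_atMost del: upt_Suc)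
qed

section \<open>Linear substitution in polynomials\<close>

lemma prod_list_map_eq_prod_count:
  fixes g :: "nat \<Rightarrow> 'a::comm_monoid_mult"
  assumes "set is \<subseteq> {..<n}"
  shows "prod_list (map g is) = (\<Prod>k<n. g k ^ count_list is k)"
  using assms
proof (induction "is")
  case (Cons a "is")
  have "(\<Prod>k<n. g k ^ count_list (a # is) k) = (\<Prod>k<n. (if k = a then g k else 1) * g k ^ count_list is k)"
    by (intro prod.cong) auto
  also have "\<dots> = g a * (\<Prod>k<n. g k ^ count_list is k)"
    using Cons.prems by (simp add: prod.distrib prod.delta)
  finally show ?case using Cons by simp
qed simp

text \<open>\<open>transp_coeff n A \<alpha> is\<close> is the coefficient of \<open>y$(is!0) \<cdots> y$(is!(m-1))\<close> when
  \<open>(A y)^\<alpha>\<close> is expanded as the product of the rows of \<open>A\<close> picked by the word of \<open>\<alpha>\<close>.\<close>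
definition transp_coeff :: "nat \<Rightarrow> complex mat \<Rightarrow> (nat \<Rightarrow> nat) \<Rightarrow> nat list \<Rightarrow> complex" where
  "transp_coeff n A \<alpha> is = (\<Prod>j<length (monomial_word n \<alpha>). A $$ (monomial_word n \<alpha> ! j, is ! j))"

definition poly_transp_coeffs :: "nat \<Rightarrow> complex mat \<Rightarrow> coeffs \<Rightarrow> coeffs" where
  "poly_transp_coeffs n A P \<beta> = (\<Sum>\<alpha>\<in>{\<alpha>. P \<alpha> \<noteq> 0}. P \<alpha> *
      (\<Sum>is\<in>{is \<in> index_lists n (length (monomial_word n \<alpha>)). count_list is = \<beta>}. transp_coeff n A \<alpha> is))"

definition transp_support :: "nat \<Rightarrow> coeffs \<Rightarrow> (nat \<Rightarrow> nat) set" where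
  "transp_support n P = (\<Union>\<alpha>\<in>{\<alpha>. P \<alpha> \<noteq> 0}. count_list ` index_lists n (length (monomial_word n \<alpha>)))"

lemma finite_transp_support: "P \<in> polys n \<Longrightarrow> finite (transp_support n P)"
  unfolding transp_support_def polys_def using finite_index_lists by auto

lemma support_poly_transp_coeffs: "{\<beta>. poly_transp_coeffs n A P \<beta> \<noteq> 0} \<subseteq> transp_support n P"
proof
  fix \<beta> assume "\<beta> \<in> {\<beta>. poly_transp_coeffs n A P \<beta> \<noteq> 0}"
  then obtain \<alpha> where \<alpha>: "\<alpha> \<in> {\<alpha>. P \<alpha> \<noteq> 0}" and nz:
    "(\<Sum>is\<in>{is \<in> index_lists n (length (monomial_word n \<alpha>)). count_list is = \<beta>}.
      transp_coeff n A \<alpha> is) \<noteq> 0"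
    unfolding poly_transp_coeffs_def mem_Collect_eq
    by (rule sum.not_neutral_contains_not_neutral) simp
  obtain "is" where "is \<in> {is \<in> index_lists n (length (monomial_word n \<alpha>)). count_list is = \<beta>}"
    and "transp_coeff n A \<alpha> is \<noteq> 0"
    using nz by (rule sum.not_neutral_contains_not_neutral)
  then show "\<beta> \<in> transp_support n P" unfolding transp_support_def using \<alpha> by blast
qed

lemma sum_poly_transp_coeffs:
  assumes P: "P \<in> polys n"
  shows "(\<Sum>\<beta>\<in>{\<beta>. poly_transp_coeffs n A P \<beta> \<noteq> 0}. poly_transp_coeffs n A P \<beta> * h \<beta>) =
    (\<Sum>\<alpha>\<in>{\<alpha>. P \<alpha> \<noteq> 0}. P \<alpha> *
      (\<Sum>is\<in>index_lists n (length (monomial_word n \<alpha>)). transp_coeff n A \<alpha> is * h (count_list is)))"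
proof -
  let ?S = "transp_support n P" and ?I = "\<lambda>\<alpha>. index_lists n (length (monomial_word n \<alpha>))"
  have "(\<Sum>\<beta>\<in>{\<beta>. poly_transp_coeffs n A P \<beta> \<noteq> 0}. poly_transp_coeffs n A P \<beta> * h \<beta>)
      = (\<Sum>\<beta>\<in>?S. poly_transp_coeffs n A P \<beta> * h \<beta>)"
    by (intro sum.mono_neutral_left finite_transp_support P support_poly_transp_coeffs) auto
  also have "\<dots> = (\<Sum>\<alpha>\<in>{\<alpha>. P \<alpha> \<noteq> 0}. P \<alpha> *
      (\<Sum>\<beta>\<in>?S. \<Sum>is\<in>{is \<in> ?I \<alpha>. count_list is = \<beta>}. transp_coeff n A \<alpha> is * h (count_list is)))"
    unfolding poly_transp_coeffs_def sum_distrib_right sum_distrib_left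
    by (subst sum.swap) (intro sum.cong refl, simp add: sum_distrib_right mult.assoc)
  also have "\<dots> = (\<Sum>\<alpha>\<in>{\<alpha>. P \<alpha> \<noteq> 0}. P \<alpha> *
      (\<Sum>is\<in>?I \<alpha>. transp_coeff n A \<alpha> is * h (count_list is)))"
  proof (intro sum.cong refl arg_cong[where f="\<lambda>z. _ * z"])
    fix \<alpha> assume "\<alpha> \<in> {\<alpha>. P \<alpha> \<noteq> 0}"
    then have "count_list ` ?I \<alpha> \<subseteq> ?S" unfolding transp_support_def by auto
    then show "(\<Sum>\<beta>\<in>?S. \<Sum>is\<in>{is \<in> ?I \<alpha>. count_list is = \<beta>}. transp_coeff n A \<alpha> is * h (count_list is))
       = (\<Sum>is\<in>?I \<alpha>. transp_coeff n A \<alpha> is * h (count_list is))"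
      by (intro sum.group finite_index_lists finite_transp_support P)
  qed
  finally show ?thesis .
qed

lemma poly_transp_coeffs_polys:
  assumes P: "P \<in> polys n"
  shows "poly_transp_coeffs n A P \<in> polys n"
proof -
  have "\<forall>i\<ge>n. \<beta> i = 0" if "\<beta> \<in> transp_support n P" for \<beta>
    using that unfolding transp_support_def index_lists_def by (auto simp: count_list_0_iff)
  then show ?thesis using support_poly_transp_coeffs finite_subset[OF _ finite_transp_support[OF P]]
    unfolding polys_def by blast
qed

lemma poly_eval_poly_transp_coeffs:
  assumes P: "P \<in> polys n" and A: "A \<in> carrier_mat n n" and y: "y \<in> carrier_vec n"
  shows "poly_eval n (poly_transp_coeffs n A P) y = poly_eval n P (A *\<^sub>v y)"
proof -
  define h where "h \<beta> = (\<Prod>k<n. (y $ k) ^ \<beta> k)" for \<beta> :: "nat \<Rightarrow> nat"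
  have "(\<Prod>i<n. (A *\<^sub>v y) $ i ^ \<alpha> i)
      = (\<Sum>is\<in>index_lists n (length (monomial_word n \<alpha>)). transp_coeff n A \<alpha> is * h (count_list is))"
    for \<alpha>
  proof -
    let ?w = "monomial_word n \<alpha>"
    have w: "?w ! j < n" if "j < length ?w" for j
      using set_monomial_word nth_mem[OF that] by blast
    have "(\<Prod>i<n. (A *\<^sub>v y) $ i ^ \<alpha> i) = (\<Prod>j<length ?w. \<Sum>k<n. A $$ (?w ! j, k) * y $ k)"
      unfolding prod_monomial_word prod.list_conv_set_nth using w A y
      by (intro prod.cong) (auto simp: scalar_prod_def row_def lessThan_atLeast0)
    also have "\<dots> = (\<Sum>is\<in>index_lists n (length ?w). \<Prod>j<length ?w. A $$ (?w ! j, is ! j) * y $ (is ! j))"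
      by (rule prod_sum_eq_sum_index_lists)
    also have "\<dots> = (\<Sum>is\<in>index_lists n (length ?w). transp_coeff n A \<alpha> is * h (count_list is))"
    proof (intro sum.cong refl)
      fix "is" assume "is \<in> index_lists n (length ?w)"
      then have "set is \<subseteq> {..<n}" "length is = length ?w" unfolding index_lists_def by auto
      moreover have "prod_list (map (\<lambda>k. y $ k) is) = (\<Prod>j<length is. y $ (is ! j))"
        by (simp add: prod.list_conv_set_nth lessThan_atLeast0)
      ultimately have "(\<Prod>j<length ?w. y $ (is ! j)) = h (count_list is)"
        using prod_list_map_eq_prod_count[of "is" n "\<lambda>k. y $ k"] unfolding h_def by simp
      then show "(\<Prod>j<length ?w. A $$ (?w ! j, is ! j) * y $ (is ! j)) = transp_coeff n A \<alpha> is * h (count_list is)"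
        unfolding transp_coeff_def by (simp add: prod.distrib)
    qed
    finally show ?thesis .
  qed
  then have "poly_eval n P (A *\<^sub>v y) = (\<Sum>\<alpha>\<in>{\<alpha>. P \<alpha> \<noteq> 0}. P \<alpha> *
      (\<Sum>is\<in>index_lists n (length (monomial_word n \<alpha>)). transp_coeff n A \<alpha> is * h (count_list is)))"
    unfolding poly_eval_def by simp
  also have "\<dots> = poly_eval n (poly_transp_coeffs n A P) y"
    unfolding poly_eval_def using sum_poly_transp_coeffs[OF P, of A h] unfolding h_def by simp
  finally show ?thesis ..
qed

lemma sum_digits_inj:
  fixes \<alpha> \<beta> :: "nat \<Rightarrow> nat"
  assumes "\<forall>i<n. \<alpha> i < N" "\<forall>i<n. \<beta> i < N" "(\<Sum>i<n. \<alpha> i * N ^ i) = (\<Sum>i<n. \<beta> i * N ^ i)"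
  shows "\<forall>i<n. \<alpha> i = \<beta> i"
  using assms
proof (induction n arbitrary: \<alpha> \<beta>)
  case (Suc n)
  have N: "N > 0" using Suc.prems(1) by auto
  have split: "(\<Sum>i<Suc n. \<gamma> i * N ^ i) = \<gamma> 0 + N * (\<Sum>i<n. \<gamma> (Suc i) * N ^ i)" for \<gamma> :: "nat \<Rightarrow> nat"
    by (simp del: sum.lessThan_Suc add: sum.lessThan_Suc_shift sum_distrib_left mult_ac)
  define X where "X = (\<Sum>i<n. \<alpha> (Suc i) * N ^ i)"
  define Y where "Y = (\<Sum>i<n. \<beta> (Suc i) * N ^ i)"
  have eq: "\<alpha> 0 + N * X = \<beta> 0 + N * Y" using Suc.prems(3) unfolding split X_def Y_def .
  have lt: "\<alpha> 0 < N" "\<beta> 0 < N" using Suc.prems by auto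
  have "\<alpha> 0 = (\<alpha> 0 + N * X) mod N" using lt by simp
  also have "\<dots> = (\<beta> 0 + N * Y) mod N" using eq by simp
  also have "\<dots> = \<beta> 0" using lt by simp
  finally have head: "\<alpha> 0 = \<beta> 0" .
  have "X = (\<alpha> 0 + N * X) div N" using lt N by simp
  also have "\<dots> = (\<beta> 0 + N * Y) div N" using eq by simp
  also have "\<dots> = Y" using lt N by simp
  finally have "X = Y" .
  have "\<forall>i<n. \<alpha> (Suc i) < N" "\<forall>i<n. \<beta> (Suc i) < N" using Suc.prems(1,2) by simp_all
  from Suc.IH[OF this] have tail: "\<forall>i<n. \<alpha> (Suc i) = \<beta> (Suc i)"
    using \<open>X = Y\<close> unfolding X_def Y_def by blast
  show ?case
  proof (intro allI impI)
    fix i assume "i < Suc n"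
    then show "\<alpha> i = \<beta> i" using head tail by (cases i) auto
  qed
qed simp

lemma kronecker_inj_on:
  fixes S :: "(nat \<Rightarrow> nat) set"
  assumes "finite S" "\<forall>\<alpha>\<in>S. \<forall>i\<ge>n. \<alpha> i = 0"
  shows "\<exists>N. inj_on (\<lambda>\<alpha>. \<Sum>i<n. \<alpha> i * N ^ i) S"
proof
  define N where "N = Suc (\<Sum>\<alpha>\<in>S. \<Sum>i<n. \<alpha> i)"
  have lt: "\<alpha> i < N" if "\<alpha> \<in> S" "i < n" for \<alpha> i
  proof -
    have "\<alpha> i \<le> (\<Sum>i<n. \<alpha> i)" using that by (intro member_le_sum) auto
    also have "\<dots> \<le> (\<Sum>\<alpha>\<in>S. \<Sum>i<n. \<alpha> i)" using that assms(1) by (intro member_le_sum) auto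
    finally show ?thesis unfolding N_def by simp
  qed
  show "inj_on (\<lambda>\<alpha>. \<Sum>i<n. \<alpha> i * N ^ i) S"
  proof (intro inj_onI ext)
    fix \<alpha> \<beta> i assume S: "\<alpha> \<in> S" "\<beta> \<in> S" and "(\<Sum>i<n. \<alpha> i * N ^ i) = (\<Sum>i<n. \<beta> i * N ^ i)"
    then have "\<forall>i<n. \<alpha> i = \<beta> i" using sum_digits_inj[of n \<alpha> N \<beta>] lt by blast
    then show "\<alpha> i = \<beta> i" using assms(2) S by (cases "i < n") (simp, metis not_less)
  qed
qed

text \<open>Kronecker substitution \<open>y\<^sub>i = t^(N^i)\<close> reduces the claim to univariate polynomials.\<close>
lemma poly_eval_inject:
  assumes c: "c \<in> polys n" and d: "d \<in> polys n"
    and eq: "\<forall>y\<in>carrier_vec n. poly_eval n c y = poly_eval n d y"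
  shows "c = d"
proof -
  define S where "S = {\<alpha>. c \<alpha> \<noteq> 0} \<union> {\<alpha>. d \<alpha> \<noteq> 0}"
  have fS: "finite S" and "\<forall>\<alpha>\<in>S. \<forall>i\<ge>n. \<alpha> i = 0" using c d unfolding S_def polys_def by auto
  then obtain N where inj: "inj_on (\<lambda>\<alpha>. \<Sum>i<n. \<alpha> i * N ^ i) S" using kronecker_inj_on by blast
  define \<kappa> where "\<kappa> \<alpha> = (\<Sum>i<n. \<alpha> i * N ^ i)" for \<alpha> :: "nat \<Rightarrow> nat"
  define yt where "yt t = vec n (\<lambda>i. t ^ (N ^ i))" for t :: complex
  have monomial: "(\<Prod>i<n. (yt t $ i) ^ \<alpha> i) = t ^ \<kappa> \<alpha>" for t \<alpha>
    unfolding yt_def \<kappa>_def power_sum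
    by (intro prod.cong refl) (simp add: power_mult[symmetric] mult.commute)
  have eval_S: "poly_eval n e (yt t) = (\<Sum>\<alpha>\<in>S. e \<alpha> * t ^ \<kappa> \<alpha>)"
    if "{\<alpha>. e \<alpha> \<noteq> 0} \<subseteq> S" for e t
    unfolding poly_eval_def monomial by (intro sum.mono_neutral_left fS that) auto
  define co where "co p = (\<Sum>\<alpha>\<in>{\<alpha> \<in> S. \<kappa> \<alpha> = p}. c \<alpha> - d \<alpha>)" for p
  define K where "K = (\<Sum>\<alpha>\<in>S. \<kappa> \<alpha>)"
  have kK: "\<kappa> \<alpha> \<le> K" if "\<alpha> \<in> S" for \<alpha> unfolding K_def using fS that by (intro member_le_sum) auto
  have "(\<Sum>p\<le>K. co p * t ^ p) = 0" for t
  proof -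
    have "(\<Sum>p\<le>K. co p * t ^ p) = (\<Sum>p\<le>K. \<Sum>\<alpha>\<in>{\<alpha> \<in> S. \<kappa> \<alpha> = p}. (c \<alpha> - d \<alpha>) * t ^ \<kappa> \<alpha>)"
      unfolding co_def sum_distrib_right by (intro sum.cong refl) auto
    also have "\<dots> = (\<Sum>\<alpha>\<in>S. (c \<alpha> - d \<alpha>) * t ^ \<kappa> \<alpha>)"
      using kK by (intro sum.group fS) auto
    also have "\<dots> = poly_eval n c (yt t) - poly_eval n d (yt t)"
      using eval_S[of c t] eval_S[of d t] by (simp add: S_def left_diff_distrib sum_subtractf)
    also have "\<dots> = 0" using eq unfolding yt_def by simp
    finally show ?thesis .
  qed
  then have "\<forall>p\<le>K. co p = 0" using polyfun_eq_0[of co K] by blast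
  moreover have "co (\<kappa> \<alpha>) = c \<alpha> - d \<alpha>" if "\<alpha> \<in> S" for \<alpha>
  proof -
    have "{\<beta> \<in> S. \<kappa> \<beta> = \<kappa> \<alpha>} = {\<alpha>}" using inj_onD[OF inj] that unfolding \<kappa>_def by auto
    then show ?thesis unfolding co_def by simp
  qed
  ultimately have "c \<alpha> = d \<alpha>" if "\<alpha> \<in> S" for \<alpha> using kK that by fastforce
  then show ?thesis unfolding S_def by (intro ext) (metis (mono_tags) UnI1 UnI2 mem_Collect_eq)
qed

lemma poly_transp_eq_poly_transp_coeffs:
  assumes P: "P \<in> polys n" and A: "A \<in> carrier_mat n n"
  shows "poly_transp n A P = poly_transp_coeffs n A P"
  unfolding poly_transp_def
proof (rule the_equality)
  show "poly_transp_coeffs n A P \<in> polys n \<and>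
      (\<forall>y\<in>carrier_vec n. poly_eval n (poly_transp_coeffs n A P) y = poly_eval n P (A *\<^sub>v y))"
    using poly_transp_coeffs_polys[OF P] poly_eval_poly_transp_coeffs[OF P A] by auto
  fix c assume "c \<in> polys n \<and> (\<forall>y\<in>carrier_vec n. poly_eval n c y = poly_eval n P (A *\<^sub>v y))"
  then show "c = poly_transp_coeffs n A P"
    using poly_eval_inject[of c n "poly_transp_coeffs n A P"] poly_transp_coeffs_polys[OF P]
      poly_eval_poly_transp_coeffs[OF P A] by auto
qed

section \<open>Linear change of variables in expressions\<close>

primrec rpull :: "complex mat \<Rightarrow> rexpr \<Rightarrow> rexpr" where
  "rpull A (Cst c) = Cst c"
| "rpull A (Lin v) = Lin (A *\<^sub>v v)"
| "rpull A (Inv v) = Inv (A *\<^sub>v v)"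
| "rpull A (Add a b) = Add (rpull A a) (rpull A b)"
| "rpull A (Mul a b) = Mul (rpull A a) (rpull A b)"
| "rpull A (Smul c a) = Smul c (rpull A a)"

lemma scalar_prod_mult_mat_vec:
  fixes A :: "'a::comm_ring mat"
  assumes "A \<in> carrier_mat n n" "u \<in> carrier_vec n" "v \<in> carrier_vec n"
  shows "u \<bullet> (A *\<^sub>v v) = (transpose_mat A *\<^sub>v u) \<bullet> v"
  using transpose_vec_mult_scalar[OF assms(1) assms(3) assms(2)] by simp

lemma rderiv_rpull:
  assumes A: "A \<in> carrier_mat n n" and "rexpr_dim n e" and u: "u \<in> carrier_vec n"
  shows "rderiv u (rpull A e) = rpull A (rderiv (transpose_mat A *\<^sub>v u) e)"
  using assms(2) by (induction e) (auto simp: scalar_prod_mult_mat_vec[OF A u])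

lemma rderivs_rpull:
  assumes A: "A \<in> carrier_mat n n" and "rexpr_dim n e" and "set us \<subseteq> carrier_vec n"
  shows "rderivs us (rpull A e) = rpull A (rderivs (map (\<lambda>u. transpose_mat A *\<^sub>v u) us) e)"
  using assms(2,3) by (induction us arbitrary: e) (simp_all add: rderiv_rpull[OF A] rexpr_dim_rderiv)

lemma reval_rpull:
  assumes A: "A \<in> carrier_mat n n" and "rexpr_dim n e" and y: "y \<in> carrier_vec n"
  shows "reval (rpull A e) y = reval e (transpose_mat A *\<^sub>v y)"
  using assms(2) by (induction e) (auto simp: scalar_prod_mult_mat_vec[OF A y])

lemma rexpr_dim_rpull: "A \<in> carrier_mat n n \<Longrightarrow> rexpr_dim n e \<Longrightarrow> rexpr_dim n (rpull A e)"
  by (induction e) auto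

lemma rdom_rpull:
  assumes A: "A \<in> carrier_mat n n" and "rexpr_dim n e" and y: "y \<in> carrier_vec n"
  shows "y \<in> rdom n (rpull A e) \<longleftrightarrow> transpose_mat A *\<^sub>v y \<in> rdom n e"
proof -
  have "poles (rpull A e) = (\<lambda>v. A *\<^sub>v v) ` poles e" by (induction e) auto
  then show ?thesis unfolding rdom_def
    using y A poles_carrier[OF assms(2)] by (auto simp: scalar_prod_mult_mat_vec[OF A y])
qed

lemma mset_monomial_word_count_list:
  assumes "set is \<subseteq> {..<n}"
  shows "mset (monomial_word n (count_list is)) = mset is"
proof (rule multiset_eqI)
  fix k
  show "count (mset (monomial_word n (count_list is))) k = count (mset is) k"
    using assms by (cases "k < n") (auto simp: count_mset count_monomial_word count_list_0_iff)
qed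

lemma reval_rderivs_rpull_monomial:
  assumes A: "A \<in> carrier_mat n n" and E: "rexpr_dim n E"
    and x: "x \<in> carrier_vec n" and dom: "transpose_mat A *\<^sub>v x \<in> rdom n E"
  shows "reval (rderivs (monomial_dirs n \<alpha>) (rpull A E)) x
    = (\<Sum>is\<in>index_lists n (length (monomial_word n \<alpha>)). transp_coeff n A \<alpha> is *
         reval (rderivs (monomial_dirs n (count_list is)) E) (transpose_mat A *\<^sub>v x))"
proof -
  let ?w = "monomial_word n \<alpha>" and ?x' = "transpose_mat A *\<^sub>v x"
  let ?W = "map (\<lambda>u. transpose_mat A *\<^sub>v u) (monomial_dirs n \<alpha>)"
  have W: "set ?W \<subseteq> carrier_vec n" using A by auto
  have dirs: "set (monomial_dirs n \<alpha>) \<subseteq> carrier_vec n" by auto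
  have "reval (rderivs (monomial_dirs n \<alpha>) (rpull A E)) x = reval (rderivs ?W E) ?x'"
    unfolding rderivs_rpull[OF A E dirs] reval_rpull[OF A rexpr_dim_rderivs[OF E] x] ..
  also have "\<dots> = (\<Sum>is\<in>index_lists n (length ?w).
      (\<Prod>j<length ?w. ?W ! j $ (is ! j)) * reval (rderivs (map (unit_vec n) is) E) ?x')"
    using reval_rderivs_multilinear[OF W E dom] by simp
  also have "\<dots> = (\<Sum>is\<in>index_lists n (length ?w). transp_coeff n A \<alpha> is *
      reval (rderivs (monomial_dirs n (count_list is)) E) ?x')"
  proof (intro sum.cong refl)
    fix "is" assume "is \<in> index_lists n (length ?w)"
    then have "is": "set is \<subseteq> {..<n}" "length is = length ?w" unfolding index_lists_def by auto
    have "?W ! j $ (is ! j) = A $$ (?w ! j, is ! j)" if j: "j < length ?w" for j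
    proof -
      have "?w ! j < n" "is ! j < n" using set_monomial_word "is" j nth_mem by (metis lessThan_iff subsetD)+
      then show ?thesis using A j by (simp add: row_transpose)
    qed
    moreover have "reval (rderivs (map (unit_vec n) is) E) ?x'
        = reval (rderivs (monomial_dirs n (count_list is)) E) ?x'"
      using mset_monomial_word_count_list[OF "is"(1)] by (intro reval_rderivs_perm[OF _ E dom]) auto
    ultimately show "(\<Prod>j<length ?w. ?W ! j $ (is ! j)) * reval (rderivs (map (unit_vec n) is) E) ?x'
        = transp_coeff n A \<alpha> is * reval (rderivs (monomial_dirs n (count_list is)) E) ?x'"
      unfolding transp_coeff_def by simp
  qed
  finally show ?thesis .
qed

lemma diff_op_rpull:
  assumes A: "A \<in> carrier_mat n n" and P: "P \<in> polys n" and E: "rexpr_dim n E"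
    and x: "x \<in> carrier_vec n" and dom: "transpose_mat A *\<^sub>v x \<in> rdom n E"
  shows "diff_op n P (reval (rpull A E)) x = diff_op n (poly_transp n A P) (reval E) (transpose_mat A *\<^sub>v x)"
proof -
  let ?x' = "transpose_mat A *\<^sub>v x" and ?I = "\<lambda>\<alpha>. index_lists n (length (monomial_word n \<alpha>))"
  define \<tau> where "\<tau> \<beta> = reval (rderivs (monomial_dirs n \<beta>) E) ?x'" for \<beta>
  have sign: "(-1) ^ (\<Sum>i<n. count_list is i) = ((-1) ^ (\<Sum>i<n. \<alpha> i) :: complex)" if "is \<in> ?I \<alpha>" for "is" \<alpha>
    using that sum_count_set[of "is" "{..<n}"] length_monomial_word unfolding index_lists_def by simp
  have x_dom: "x \<in> rdom n (rpull A E)" using rdom_rpull[OF A E x] dom by simp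
  have "diff_op n P (reval (rpull A E)) x
      = (\<Sum>\<alpha>\<in>{\<alpha>. P \<alpha> \<noteq> 0}. P \<alpha> * (-1) ^ (\<Sum>i<n. \<alpha> i) * (\<Sum>is\<in>?I \<alpha>. transp_coeff n A \<alpha> is * \<tau> (count_list is)))"
    using diff_op_reval[OF rexpr_dim_rpull[OF A E] x_dom, of P] reval_rderivs_rpull_monomial[OF A E x dom]
    unfolding \<tau>_def by simp
  also have "\<dots> = (\<Sum>\<alpha>\<in>{\<alpha>. P \<alpha> \<noteq> 0}. P \<alpha> *
      (\<Sum>is\<in>?I \<alpha>. transp_coeff n A \<alpha> is * ((-1) ^ (\<Sum>i<n. count_list is i) * \<tau> (count_list is))))"
    by (intro sum.cong refl) (simp add: sign sum_distrib_left mult_ac)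
  also have "\<dots> = (\<Sum>\<beta>\<in>{\<beta>. poly_transp_coeffs n A P \<beta> \<noteq> 0}.
      poly_transp_coeffs n A P \<beta> * ((-1) ^ (\<Sum>i<n. \<beta> i) * \<tau> \<beta>))"
    by (rule sum_poly_transp_coeffs[OF P, symmetric])
  also have "\<dots> = diff_op n (poly_transp n A P) (reval E) ?x'"
    unfolding diff_op_reval[OF E dom] poly_transp_eq_poly_transp_coeffs[OF P A] \<tau>_def
    by (simp add: mult_ac)
  finally show ?thesis .
qed

section \<open>The cocycle \<open>\<psi>\<close>\<close>

definition selected_mat :: "nat \<Rightarrow> (nat \<Rightarrow> complex mat) \<Rightarrow> complex vec \<Rightarrow> complex mat" where
  "selected_mat n As x = mat n n (\<lambda>(i, k). col (As k) (sel_index n (As k) x) $ i)"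

lemma selected_mat_carrier: "selected_mat n As x \<in> carrier_mat n n"
  unfolding selected_mat_def by simp

lemma col_carrier_GL: "B \<in> GL n \<Longrightarrow> col B j \<in> carrier_vec n"
  unfolding GL_def by (auto simp: carrier_matD)

lemma GL_mult: "A \<in> GL n \<Longrightarrow> B \<in> GL n \<Longrightarrow> A * B \<in> GL n"
  unfolding GL_def by (auto simp: det_mult)

lemma sel_index_spec:
  fixes x :: "complex vec"
  assumes x: "x \<in> carrier_vec n" "x \<noteq> 0\<^sub>v n" and B: "B \<in> GL n"
  shows "sel_index n B x < n" and "x \<bullet> col B (sel_index n B x) \<noteq> 0"
proof -
  have B': "B \<in> carrier_mat n n" "det B \<noteq> 0" using B unfolding GL_def by auto
  have "\<exists>j<n. x \<bullet> col B j \<noteq> 0"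
  proof (rule ccontr)
    assume "\<not> ?thesis"
    then have "transpose_mat B *\<^sub>v x = 0\<^sub>v n"
      using B' x comm_scalar_prod[of _ n x] by (intro eq_vecI) auto
    then show False using transpose_mult_vec_eq_zero[OF B' x(1)] x(2) by simp
  qed
  then show "sel_index n B x < n" "x \<bullet> col B (sel_index n B x) \<noteq> 0"
    using LeastI_ex unfolding sel_index_def by (metis (mono_tags, lifting))+
qed

lemma col_selected_mat:
  assumes "\<forall>k<n. As k \<in> GL n" "j < n"
  shows "col (selected_mat n As x) j = col (As j) (sel_index n (As j) x)"
proof -
  have "As j \<in> carrier_mat n n" using assms unfolding GL_def by auto
  then show ?thesis unfolding selected_mat_def using assms(2) by (auto intro!: eq_vecI)
qed

lemma psi_eq_diff_op:
  fixes x :: "complex vec"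
  assumes "x \<in> carrier_vec n" "x \<noteq> 0\<^sub>v n" "\<forall>k<n. As k \<in> GL n"
  shows "x \<in> rdom n (f_rexpr n (selected_mat n As x))"
    and "psi n As P x = diff_op n P (f_fun n (selected_mat n As x)) x"
proof -
  have "\<forall>j<n. x \<bullet> col (selected_mat n As x) j \<noteq> 0"
    using col_selected_mat[OF assms(3)] sel_index_spec(2)[OF assms(1,2)] assms(3) by simp
  then show "x \<in> rdom n (f_rexpr n (selected_mat n As x))" "psi n As P x = diff_op n P (f_fun n (selected_mat n As x)) x"
    using assms unfolding rdom_f_rexpr psi_def f_op_def selected_mat_def by simp_all
qed

lemma selected_mat_mult:
  fixes x :: "complex vec"
  assumes A: "A \<in> GL n" and As: "\<forall>k<n. As k \<in> GL n" and x: "x \<in> carrier_vec n" "x \<noteq> 0\<^sub>v n"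
  shows "selected_mat n (\<lambda>k. A * As k) x = A * selected_mat n As (transpose_mat A *\<^sub>v x)"
proof -
  let ?x' = "transpose_mat A *\<^sub>v x"
  have A': "A \<in> carrier_mat n n" using A unfolding GL_def by auto
  have As': "As k \<in> carrier_mat n n" if "k < n" for k using As that unfolding GL_def by auto
  have "x \<bullet> col (A * As k) j = ?x' \<bullet> col (As k) j" if "k < n" "j < n" for k j
  proof -
    have "col (As k) j \<in> carrier_vec n" using col_carrier_GL As that by auto
    then show ?thesis
      using scalar_prod_mult_mat_vec[OF A' x(1)] col_mult2[OF A' As'[OF that(1)] that(2)] by simp
  qed
  then have sel: "sel_index n (A * As k) x = sel_index n (As k) ?x'" if "k < n" for k
    unfolding sel_index_def using that by metis
  have x': "?x' \<in> carrier_vec n" "?x' \<noteq> 0\<^sub>v n"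
    using A' x transpose_mult_vec_eq_zero[of A n x] A unfolding GL_def by auto
  show ?thesis
  proof (rule eq_matI)
    fix i j assume "i < dim_row (A * selected_mat n As ?x')" "j < dim_col (A * selected_mat n As ?x')"
    then have ij: "i < n" "j < n" using A' by (auto simp: selected_mat_def)
    have "col (A * As j) (sel_index n (As j) ?x') = A *\<^sub>v col (selected_mat n As ?x') j"
      using col_selected_mat[OF As ij(2)] col_mult2[OF A' As'[OF ij(2)] sel_index_spec(1)[OF x']] As ij
      by simp
    then show "selected_mat n (\<lambda>k. A * As k) x $$ (i, j) = (A * selected_mat n As ?x') $$ (i, j)"
      using ij A' sel[OF ij(2)] by (simp add: selected_mat_def col_def[symmetric])
  qed (use A' in \<open>auto simp: selected_mat_def\<close>)
qed

lemma f_fun_mult: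
  assumes A: "A \<in> carrier_mat n n" and \<sigma>: "\<sigma> \<in> carrier_mat n n"
  shows "f_fun n (A * \<sigma>) = reval (rpull A (Smul (det A) (f_rexpr n \<sigma>)))"
proof
  fix y
  have "rpull A (rprod es) = rprod (map (rpull A) es)" for es by (induction es) auto
  then have "reval (rpull A (Smul (det A) (f_rexpr n \<sigma>))) y
      = det A * det \<sigma> * (\<Prod>j<n. inverse (y \<bullet> (A *\<^sub>v col \<sigma> j)))"
    unfolding f_rexpr_def by (simp add: reval_rprod comp_def prod_list_map_upt)
  also have "\<dots> = reval (f_rexpr n (A * \<sigma>)) y"
    unfolding reval_f_rexpr det_mult[OF A \<sigma>] using A \<sigma> by (auto intro!: prod.cong)
  finally show "f_fun n (A * \<sigma>) y = reval (rpull A (Smul (det A) (f_rexpr n \<sigma>))) y"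
    unfolding f_fun_eq_reval ..
qed

lemma diff_op_reval_Smul:
  assumes "rexpr_dim n e" "y \<in> rdom n e"
  shows "diff_op n P (reval (Smul c e)) y = c * diff_op n P (reval e) y"
proof -
  have "y \<in> rdom n (Smul c e)" using assms(2) unfolding rdom_def by simp
  then show ?thesis
    using assms by (simp add: diff_op_reval rderivs_Smul sum_distrib_left mult_ac)
qed

theorem psi_mult:
  fixes x :: "complex vec"
  assumes A: "A \<in> GL n" and As: "\<forall>k<n. As k \<in> GL n" and P: "P \<in> polys n" and x: "x \<in> carrier_vec n"
  shows "psi n (\<lambda>k. A * As k) P x = det A * psi n As (poly_transp n A P) (transpose_mat A *\<^sub>v x)"
proof (cases "x = 0\<^sub>v n")
  case True
  moreover have "transpose_mat A *\<^sub>v 0\<^sub>v n = 0\<^sub>v n" using A unfolding GL_def by auto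
  ultimately show ?thesis unfolding psi_def by simp
next
  case False
  let ?x' = "transpose_mat A *\<^sub>v x"
  define \<sigma> where "\<sigma> = selected_mat n As ?x'"
  define E where "E = Smul (det A) (f_rexpr n \<sigma>)"
  have A': "A \<in> carrier_mat n n" using A unfolding GL_def by auto
  have x': "?x' \<in> carrier_vec n" "?x' \<noteq> 0\<^sub>v n"
    using A' x False transpose_mult_vec_eq_zero[of A n x] A unfolding GL_def by auto
  have \<sigma>: "\<sigma> \<in> carrier_mat n n" unfolding \<sigma>_def by (rule selected_mat_carrier)
  have E: "rexpr_dim n E" unfolding E_def by (simp add: rexpr_dim_f_rexpr[OF \<sigma>])
  have dom: "?x' \<in> rdom n (f_rexpr n \<sigma>)" unfolding \<sigma>_def by (rule psi_eq_diff_op(1)[OF x' As])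
  then have dom_E: "?x' \<in> rdom n E" unfolding E_def rdom_def by simp
  have "psi n (\<lambda>k. A * As k) P x = diff_op n P (f_fun n (A * \<sigma>)) x"
    using psi_eq_diff_op(2)[OF x False, of "\<lambda>k. A * As k"] As GL_mult[OF A]
    unfolding \<sigma>_def selected_mat_mult[OF A As x False] by simp
  also have "\<dots> = diff_op n (poly_transp n A P) (reval E) ?x'"
    unfolding f_fun_mult[OF A' \<sigma>] E_def[symmetric] by (rule diff_op_rpull[OF A' P E x dom_E])
  also have "\<dots> = det A * diff_op n (poly_transp n A P) (f_fun n \<sigma>) ?x'"
    unfolding E_def f_fun_eq_reval
    by (rule diff_op_reval_Smul[OF rexpr_dim_f_rexpr[OF \<sigma>] dom])
  also have "\<dots> = det A * psi n As (poly_transp n A P) ?x'"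
    unfolding \<sigma>_def using psi_eq_diff_op(2)[OF x' As] by simp
  finally show ?thesis .
qed

lemma selected_mat_omit:
  "selected_mat n (\<lambda>k. if k < i then B k else B (Suc k)) x
    = omit_col_mat n (\<lambda>k. col (B k) (sel_index n (B k) x)) i"
  unfolding selected_mat_def omit_col_mat_def skip_index_def by (intro eq_matI) auto

theorem psi_cocycle:
  fixes x :: "complex vec"
  assumes B: "\<forall>k\<le>n. B k \<in> GL n" and x: "x \<in> carrier_vec n"
  shows "(\<Sum>i\<le>n. (-1) ^ i * psi n (\<lambda>k. if k < i then B k else B (Suc k)) P x) = 0"
proof (cases "x = 0\<^sub>v n")
  case True
  then show ?thesis unfolding psi_def by simp
next
  case False
  define c where "c = (\<lambda>k. col (B k) (sel_index n (B k) x))"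
  have c: "\<forall>k\<le>n. c k \<in> carrier_vec n" using B col_carrier_GL unfolding c_def by auto
  have nz: "\<forall>k\<le>n. x \<bullet> c k \<noteq> 0" using sel_index_spec(2)[OF x False] B unfolding c_def by auto
  have psi_omit: "psi n (\<lambda>k. if k < i then B k else B (Suc k)) P x
     = (\<Sum>\<alpha>\<in>{\<alpha>. P \<alpha> \<noteq> 0}. P \<alpha> * (-1) ^ (\<Sum>i<n. \<alpha> i) *
         reval (rderivs (monomial_dirs n \<alpha>) (f_rexpr n (omit_col_mat n c i))) x)"
    if i: "i \<le> n" for i
  proof -
    let ?As = "\<lambda>k. if k < i then B k else B (Suc k)"
    have As: "\<forall>k<n. ?As k \<in> GL n" using B i by auto
    show ?thesis
      using psi_eq_diff_op[OF x False As] diff_op_reval[OF rexpr_dim_f_rexpr[OF omit_col_mat_carrier]]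
        selected_mat_omit[of n i B x, folded c_def] by (simp add: f_fun_eq_reval)
  qed
  have "(\<Sum>i\<le>n. (-1) ^ i * psi n (\<lambda>k. if k < i then B k else B (Suc k)) P x)
     = (\<Sum>\<alpha>\<in>{\<alpha>. P \<alpha> \<noteq> 0}. P \<alpha> * (-1) ^ (\<Sum>i<n. \<alpha> i) *
         (\<Sum>i\<le>n. (-1) ^ i * reval (rderivs (monomial_dirs n \<alpha>) (f_rexpr n (omit_col_mat n c i))) x))"
    by (simp add: psi_omit sum_distrib_left sum_distrib_right mult_ac sum.swap[of _ "{..n}"])
  also have "\<dots> = 0"
  proof -
    have "set (monomial_dirs n \<alpha>) \<subseteq> carrier_vec n" for \<alpha> by auto
    then show ?thesis using reval_rderivs_f_rexpr_alternating_sum[OF x c nz] by (intro sum.neutral) auto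
  qed
  finally show ?thesis .
qed

theorem mainTheorem2:
  fixes n :: nat and A :: "complex mat" and B As :: "nat \<Rightarrow> complex mat"
    and P :: coeffs and x :: "complex vec"
  assumes "A \<in> GL n" and "\<forall>k\<le>n. B k \<in> GL n" and "\<forall>k<n. As k \<in> GL n"
    and "P \<in> homog_polys n" and "x \<in> carrier_vec n"
  shows "psi n (\<lambda>k. A * As k) P x
           = det A * psi n As (poly_transp n A P) (transpose_mat A *\<^sub>v x)
       \<and> (\<Sum>i\<le>n. (-1) ^ i * psi n (\<lambda>k. if k < i then B k else B (Suc k)) P x) = 0"
proof
  have "P \<in> polys n" using assms(4) unfolding homog_polys_def by simp
  then show "psi n (\<lambda>k. A * As k) P x = det A * psi n As (poly_transp n A P) (transpose_mat A *\<^sub>v x)"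
    using psi_mult assms(1,3,5) by blast
  show "(\<Sum>i\<le>n. (-1) ^ i * psi n (\<lambda>k. if k < i then B k else B (Suc k)) P x) = 0"
    using psi_cocycle assms(2,5) by blast
qed

end
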